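(* Let $n\ge 2$, $p\ge 1$, $N\ge 1$, and let $\mathbf{x}=\{x_1,\dots,x_n\}$ be a sample of $p$-variate functions observed at $N$ time points $t_1,\dots,t_N$, i.e. real numbers $x_i^j(t_k)$ for $i=1,\dots,n$, $j=1,\dots,p$, $k=1,\dots,N$. Let $U=\mathbf{MEI}_d(\mathbf{x})$ and $V=\mathbf{MBD}_d(\mathbf{x})$ (the $n\times p$ matrices defined in the context), with rows $u_1,\dots,u_n$ and $v_1,\dots,v_n$ regarded as vectors in $\mathbb{R}^p$. Define $g_n:[0,1]\to\mathbb{R}$ by $$g_n(z)=\frac{2}{n}+z-\frac{n}{2(n-1)}\,z^2 .$$ (a) Suppose that for every $j\in\{1,\dots,p\}$, every $i\neq h$ in $\{1,\dots,n\}$ and every $k_1,k_2\in\{1,\dots,N\}$, $$\big(x_i^j(t_{k_1})-x_h^j(t_{k_1})\big)\big(x_i^j(t_{k_2})-x_h^j(t_{k_2})\big)>0 .$$ Then for every $i=1,\dots,n$, $$MBD_{\{u_1,\dots,u_n\}}(u_i)\;\le\; g_n\!\left(1-MEI_{\{v_1,\dots,v_n\}}(v_i)\right).$$ (b) If, in addition to the hypothesis of (a), for every $k\in\{1,\dots,N\}$, every $i\neq h$ and every $j\neq \ell$ in $\{1,\dots,p\}$, $$\big(x_i^j(t_{k})-x_h^j(t_{k})\big)\big(x_i^\ell(t_{k})-x_h^\ell(t_{k})\big)>0,$$ then for every $i=1,\dots,n$, $$MBD_{\{u_1,\dots,u_n\}}(u_i)\;=\; g_n\!\left(1-MEI_{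\{v_1,\dots,v_n\}}(v_i)\right).$$
   Context: Discrete modified band depth and modified epigraph index: for vectors $y_1,\dots,y_n\in\mathbb{R}^m$ (viewed as functions on the index set $\{1,\dots,m\}$) and $y\in\{y_1,\dots,y_n\}$, $$MBD_{\{y_1,\dots,y_n\}}(y)=\binom{n}{2}^{-1}\sum_{1\le a<b\le n}\frac{1}{m}\,\#\big\{k\in\{1,\dots,m\}:\ \min(y_a(k),y_b(k))\le y(k)\le \max(y_a(k),y_b(k))\big\},$$ $$MEI_{\{y_1,\dots,y_n\}}(y)=\frac{1}{n}\sum_{a=1}^{n}\frac{1}{m}\,\#\big\{k\in\{1,\dots,m\}:\ y_a(k)\ge y(k)\big\}.$$ For the sample $\mathbf{x}$, for each dimension $j$ let $x_i^j=(x_i^j(t_1),\dots,x_i^j(t_N))\in\mathbb{R}^N$. The $n\times p$ matrices $\mathbf{MBD}_d(\mathbf{x})$ and $\mathbf{MEI}_d(\mathbf{x})$ have entries $\mathbf{MBD}_d(\mathbf{x})_{ij}=MBD_{\{x_1^j,\dots,x_n^j\}}(x_i^j)$ and $\mathbf{MEI}_d(\mathbf{x})_{ij}=MEI_{\{x_1^j,\dots,x_n^j\}}(x_i^j)$ (depths computed within each dimension $j$ over the $N$ time points). The depths $MBD_{\{u_1,\dots,u_n\}}$ and $MEI_{\{v_1,\dots,v_n\}}$ in the claim are then computed on the rows of these matrices, treated as vectors indexed by $j=1,\dots,p$. *)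

theory Defs
  imports Complex_Main
begin

text \<open>Vectors y_1..y_n in R^m are given as Y :: nat => nat => real, with Y a k the
k-th coordinate of y_a, indices a in {1..n}, k in {1..m}. A single vector y is nat => real.\<close>

definition MBD :: "nat \<Rightarrow> nat \<Rightarrow> (nat \<Rightarrow> nat \<Rightarrow> real) \<Rightarrow> (nat \<Rightarrow> real) \<Rightarrow> real" where
  "MBD n m Y y = (1 / real (n choose 2)) *
     (\<Sum>a\<in>{1..n}. \<Sum>b\<in>{a+1..n}.
        (1 / real m) * real (card {k\<in>{1..m}. min (Y a k) (Y b k) \<le> y k \<and> y k \<le> max (Y a k) (Y b k)}))"

definition MEI :: "nat \<Rightarrow> nat \<Rightarrow> (nat \<Rightarrow> nat \<Rightarrow> real) \<Rightarrow> (nat \<Rightarrow> real) \<Rightarrow> real" where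
  "MEI n m Y y = (1 / real n) *
     (\<Sum>a\<in>{1..n}. (1 / real m) * real (card {k\<in>{1..m}. Y a k \<ge> y k}))"

text \<open>Sample x i j k = x_i^j(t_k). Matrices MBD_d(x) and MEI_d(x): entry (i,j).\<close>

definition MBD_mat :: "nat \<Rightarrow> nat \<Rightarrow> (nat \<Rightarrow> nat \<Rightarrow> nat \<Rightarrow> real) \<Rightarrow> nat \<Rightarrow> nat \<Rightarrow> real" where
  "MBD_mat n N x i j = MBD n N (\<lambda>a k. x a j k) (\<lambda>k. x i j k)"

definition MEI_mat :: "nat \<Rightarrow> nat \<Rightarrow> (nat \<Rightarrow> nat \<Rightarrow> nat \<Rightarrow> real) \<Rightarrow> nat \<Rightarrow> nat \<Rightarrow> real" where
  "MEI_mat n N x i j = MEI n N (\<lambda>a k. x a j k) (\<lambda>k. x i j k)"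

definition g_fun :: "nat \<Rightarrow> real \<Rightarrow> real" where
  "g_fun n z = 2 / real n + z - real n / (2 * (real n - 1)) * z\<^sup>2"

end

theory Submission
  imports Defs "HOL-Analysis.Convex"
begin

(* Under hypothesis (a) the curves of each dimension j never cross, so every depth of x_i^j
   computed within dimension j depends only on the rank r of x_i^j among the n curves: the MEI
   entry is (n - r)/n and the MBD entry is ((n - 1) + r (n - 1 - r)) / (n choose 2).  The MEI
   matrix therefore orders the sample in each column exactly in reverse, band depth is invariant
   under this reversal, and MBD(u_i) becomes the mean over j of g_n(z_ij), where
   z_ij = 2 min(r, n - 1 - r)/n.  Counting the entries of each MBD column that are at least v_ij
   gives 1 - MEI(v_i) = mean over j of z_ij.  As g_n is a concave quadratic, (a) is the
   inequality between the square of a mean and the mean of the squares; under (b) the ranks,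
   hence the z_ij, do not depend on j, and equality holds. *)

lemma real_card_filter: "finite S \<Longrightarrow> real (card {k\<in>S. P k}) = (\<Sum>k\<in>S. if P k then 1 else 0)"
  by (simp add: sum.inter_filter[symmetric])

lemma real_choose_two: "real (n choose 2) = real n * (real n - 1) / 2"
proof -
  have "2 dvd n * (n - 1)" by (cases "even n") auto
  then have "real (n choose 2) = real (n * (n - 1)) / 2"
    unfolding choose_two by (simp add: real_of_nat_div)
  then show ?thesis by (cases n) (auto simp: algebra_simps)
qed

lemma sum_pairs_symmetric:
  fixes h :: "nat \<Rightarrow> nat \<Rightarrow> real"
  assumes sym: "\<And>a b. h a b = h b a"
  shows "(\<Sum>a\<in>{1..n}. \<Sum>b\<in>{a+1..n}. h a b) =
         ((\<Sum>a\<in>{1..n}. \<Sum>b\<in>{1..n}. h a b) - (\<Sum>a\<in>{1..n}. h a a)) / 2"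
proof (induction n)
  case (Suc n)
  have "(\<Sum>a\<in>{1..Suc n}. \<Sum>b\<in>{a+1..Suc n}. h a b) =
     (\<Sum>a\<in>{1..n}. \<Sum>b\<in>{a+1..n}. h a b) + (\<Sum>a\<in>{1..n}. h a (Suc n))"
    by (simp add: sum.distrib)
  moreover have "(\<Sum>a\<in>{1..Suc n}. \<Sum>b\<in>{1..Suc n}. h a b) =
     (\<Sum>a\<in>{1..n}. \<Sum>b\<in>{1..n}. h a b) + 2 * (\<Sum>a\<in>{1..n}. h a (Suc n)) + h (Suc n) (Suc n)"
    by (simp add: sum.distrib sym)
  ultimately show ?case using Suc.IH by simp
qed simp

lemma between_indicator:
  fixes u v y :: real
  shows "(if min u v \<le> y \<and> y \<le> max u v then 1 else 0 :: real) =
    1 - (if u < y then 1 else 0) * (if v < y then 1 else 0) - (if y < u then 1 else 0) * (if y < v then 1 else 0)"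
  by (auto simp: min_def max_def)

definition sample_rank :: "nat \<Rightarrow> (nat \<Rightarrow> real) \<Rightarrow> nat \<Rightarrow> nat" where
  "sample_rank n w i = card {a\<in>{1..n}. w a < w i}"

lemma sample_rank_cong:
  assumes "\<And>a. a \<in> {1..n} \<Longrightarrow> w a < w i \<longleftrightarrow> v a < v i"
  shows "sample_rank n w i = sample_rank n v i"
  unfolding sample_rank_def using assms by (intro arg_cong[where f = card] Collect_cong) auto

lemma sample_rank_less_card:
  assumes "i \<in> {1..n}"
  shows "sample_rank n w i < n"
proof -
  have "{a\<in>{1..n}. w a < w i} \<subseteq> {1..n} - {i}" by auto
  then have "card {a\<in>{1..n}. w a < w i} \<le> card ({1..n} - {i})" by (intro card_mono) auto
  then show ?thesis unfolding sample_rank_def using assms by auto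
qed

lemma sample_rank_strict_mono:
  assumes "a \<in> {1..n}" and "w a < w b"
  shows "sample_rank n w a < sample_rank n w b"
  unfolding sample_rank_def
  by (rule psubset_card_mono) (use assms in auto)

lemma sample_rank_less_iff:
  assumes "inj_on w {1..n}" and "a \<in> {1..n}" and "b \<in> {1..n}"
  shows "sample_rank n w a < sample_rank n w b \<longleftrightarrow> w a < w b"
proof
  assume less: "sample_rank n w a < sample_rank n w b"
  have "a \<noteq> b" using less by auto
  then have "w a \<noteq> w b" using inj_onD[OF assms(1) _ assms(2,3)] by blast
  moreover have "\<not> w b < w a" using sample_rank_strict_mono[OF assms(3), of w a] less by linarith
  ultimately show "w a < w b" by simp
qed (rule sample_rank_strict_mono[OF assms(2)])

lemma bij_betw_sample_rank:
  assumes "inj_on w {1..n}"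
  shows "bij_betw (sample_rank n w) {1..n} {0..<n}"
proof -
  have inj: "inj_on (sample_rank n w) {1..n}"
  proof (rule inj_onI)
    fix a b assume a: "a \<in> {1..n}" and b: "b \<in> {1..n}"
      and eq: "sample_rank n w a = sample_rank n w b"
    then have "\<not> w a < w b" and "\<not> w b < w a"
      using sample_rank_less_iff[OF assms a b] sample_rank_less_iff[OF assms b a] by auto
    then show "a = b" using inj_onD[OF assms _ a b] by simp
  qed
  moreover have "sample_rank n w ` {1..n} = {0..<n}"
  proof (rule card_subset_eq)
    show "sample_rank n w ` {1..n} \<subseteq> {0..<n}"
      using sample_rank_less_card by auto
    show "card (sample_rank n w ` {1..n}) = card {0..<n}"
      using card_image[OF inj] by simp
  qed simp
  ultimately show ?thesis unfolding bij_betw_def ..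
qed

lemma card_ge_sample_rank: "card {a\<in>{1..n}. w i \<le> w a} = n - sample_rank n w i"
proof -
  have "{a\<in>{1..n}. w i \<le> w a} = {1..n} - {a\<in>{1..n}. w a < w i}" by auto
  also have "card \<dots> = n - card {a\<in>{1..n}. w a < w i}"
    by (subst card_Diff_subset) auto
  finally show ?thesis unfolding sample_rank_def .
qed

lemma card_gt_sample_rank:
  assumes "inj_on w {1..n}" and "i \<in> {1..n}"
  shows "card {a\<in>{1..n}. w i < w a} = n - 1 - sample_rank n w i"
proof -
  have "{a\<in>{1..n}. w i \<le> w a} = insert i {a\<in>{1..n}. w i < w a}"
  proof (intro equalityI subsetI)
    fix a assume a: "a \<in> {a\<in>{1..n}. w i \<le> w a}"
    show "a \<in> insert i {a\<in>{1..n}. w i < w a}"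
    proof (cases "a = i")
      case False
      then have "w a \<noteq> w i" using inj_onD[OF assms(1) _ _ assms(2)] a by auto
      then show ?thesis using a by auto
    qed simp
  qed (use assms(2) in auto)
  then have "card {a\<in>{1..n}. w i \<le> w a} = Suc (card {a\<in>{1..n}. w i < w a})" by simp
  then show ?thesis using card_ge_sample_rank[of n w i] by simp
qed

lemma card_image_sample_rank:
  assumes "inj_on w {1..n}"
  shows "card {a\<in>{1..n}. P (sample_rank n w a)} = card {l\<in>{0..<n}. P l}"
proof -
  have bij: "bij_betw (sample_rank n w) {1..n} {0..<n}"
    using bij_betw_sample_rank[OF assms] .
  have "sample_rank n w ` {a\<in>{1..n}. P (sample_rank n w a)} = {l\<in>sample_rank n w ` {1..n}. P l}"
    by auto
  also have "\<dots> = {l\<in>{0..<n}. P l}"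
    using bij_betw_imp_surj_on[OF bij] by simp
  finally have "bij_betw (sample_rank n w) {a\<in>{1..n}. P (sample_rank n w a)} {l\<in>{0..<n}. P l}"
    using bij_betw_imp_inj_on[OF bij] unfolding bij_betw_def by (auto intro: inj_on_subset)
  then show ?thesis by (rule bij_betw_same_card)
qed

definition band_count :: "nat \<Rightarrow> nat \<Rightarrow> real" where
  "band_count n r = real (n - 1) + real r * (real (n - 1) - real r)"

definition centrality :: "nat \<Rightarrow> nat \<Rightarrow> real" where
  "centrality n r = 2 * real (min r (n - 1 - r)) / real n"

lemma band_count_mirror: "r < n \<Longrightarrow> band_count n (n - 1 - r) = band_count n r"
  by (simp add: band_count_def of_nat_diff algebra_simps)

lemma card_bands_containing:
  assumes inj: "inj_on w {1..n}" and i: "i \<in> {1..n}"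
  shows "(\<Sum>a\<in>{1..n}. \<Sum>b\<in>{a+1..n}. if min (w a) (w b) \<le> w i \<and> w i \<le> max (w a) (w b) then 1 else 0)
       = band_count n (sample_rank n w i)"
proof -
  let ?I = "\<lambda>a b. if min (w a) (w b) \<le> w i \<and> w i \<le> max (w a) (w b) then (1::real) else 0"
  define P where "P a = (if w a < w i then 1 else 0 :: real)" for a
  define Q where "Q a = (if w i < w a then 1 else 0 :: real)" for a
  define L where "L = (\<Sum>a\<in>{1..n}. P a)"
  define G where "G = (\<Sum>a\<in>{1..n}. Q a)"
  have L: "L = real (sample_rank n w i)"
    unfolding L_def P_def sample_rank_def by (rule real_card_filter[symmetric]) simp
  have "G = real (card {a\<in>{1..n}. w i < w a})"
    unfolding G_def Q_def by (rule real_card_filter[symmetric]) simp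
  then have G: "G = real n - 1 - real (sample_rank n w i)"
    using card_gt_sample_rank[OF inj i] sample_rank_less_card[OF i, of w] by (simp add: of_nat_diff)
  have "(\<Sum>a\<in>{1..n}. \<Sum>b\<in>{1..n}. ?I a b) = (\<Sum>a\<in>{1..n}. \<Sum>b\<in>{1..n}. 1 - P a * P b - Q a * Q b)"
    unfolding P_def Q_def by (subst between_indicator) simp
  also have "\<dots> = real n * real n - L * L - G * G"
    unfolding L_def G_def sum_product by (simp add: sum_subtractf)
  finally have full: "(\<Sum>a\<in>{1..n}. \<Sum>b\<in>{1..n}. ?I a b) = real n * real n - L * L - G * G" .
  have "(\<Sum>a\<in>{1..n}. ?I a a) = (\<Sum>a\<in>{1..n}. if a = i then 1 else 0)"
    using inj_onD[OF inj _ _ i] by (intro sum.cong) (auto simp: order_antisym_conv)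
  then have diag: "(\<Sum>a\<in>{1..n}. ?I a a) = 1" using i by simp
  have "(\<Sum>a\<in>{1..n}. \<Sum>b\<in>{a+1..n}. ?I a b) = ((\<Sum>a\<in>{1..n}. \<Sum>b\<in>{1..n}. ?I a b) - (\<Sum>a\<in>{1..n}. ?I a a)) / 2"
    by (rule sum_pairs_symmetric) (simp add: min.commute max.commute)
  also have "\<dots> = band_count n (sample_rank n w i)"
    unfolding full diag L G band_count_def using i by (simp add: of_nat_diff field_simps)
  finally show ?thesis .
qed

lemma band_count_le_iff:
  assumes "r < n" and "l < n"
  shows "band_count n r \<le> band_count n l \<longleftrightarrow> min r (n - 1 - r) \<le> l \<and> l \<le> max r (n - 1 - r)"
proof -
  have "band_count n r \<le> band_count n l \<longleftrightarrow> 0 \<le> (real l - real r) * (real (n - 1 - r) - real l)"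
    using assms unfolding band_count_def by (simp add: of_nat_diff algebra_simps)
  also have "\<dots> \<longleftrightarrow> min r (n - 1 - r) \<le> l \<and> l \<le> max r (n - 1 - r)"
    unfolding zero_le_mult_iff by (cases "r \<le> n - 1 - r") auto
  finally show ?thesis .
qed

lemma card_band_count_ge:
  assumes "r < n"
  shows "card {l\<in>{0..<n}. band_count n r \<le> band_count n l} = n - 2 * min r (n - 1 - r)"
proof -
  have "{l\<in>{0..<n}. band_count n r \<le> band_count n l} = {min r (n - 1 - r) .. max r (n - 1 - r)}"
    using band_count_le_iff[OF assms] assms by auto
  then show ?thesis using assms by auto
qed

lemma band_count_eq_g_fun:
  assumes "n \<ge> 2" and "r < n"
  shows "band_count n r / real (n choose 2) = g_fun n (centrality n r)"
proof -
  define d where "d = real (min r (n - 1 - r))"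
  have n: "real n > 1" and n1: "real (n - 1) = real n - 1" using assms(1) by auto
  have "band_count n r = band_count n (min r (n - 1 - r))"
    using band_count_mirror[OF assms(2)] by (simp add: min_def)
  also have "\<dots> = (real n - 1) + d * ((real n - 1) - d)"
    unfolding band_count_def n1 d_def ..
  finally have "band_count n r / real (n choose 2)
      = ((real n - 1) + d * ((real n - 1) - d)) / (real n * (real n - 1) / 2)"
    unfolding real_choose_two by simp
  also have "\<dots> = g_fun n (2 * d / real n)"
    using n unfolding g_fun_def by (simp add: field_simps power2_eq_square)
  finally show ?thesis unfolding centrality_def d_def .
qed

lemma g_fun_mean_le:
  assumes "n \<ge> 2" and "finite A" and "A \<noteq> {}"
  shows "(\<Sum>j\<in>A. g_fun n (z j)) / card A \<le> g_fun n ((\<Sum>j\<in>A. z j) / card A)"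
proof -
  define \<kappa> where "\<kappa> = real n / (2 * (real n - 1))"
  have g: "g_fun n t = 2 / real n + t - \<kappa> * t\<^sup>2" for t
    unfolding g_fun_def \<kappa>_def ..
  have "(\<Sum>j\<in>A. g_fun n (z j)) = card A * (2 / real n) + (\<Sum>j\<in>A. z j) - \<kappa> * (\<Sum>j\<in>A. (z j)\<^sup>2)"
    unfolding g by (simp add: sum.distrib sum_subtractf sum_distrib_left)
  also have "\<dots> = card A * (2 / real n + (\<Sum>j\<in>A. z j) / card A - \<kappa> * ((\<Sum>j\<in>A. (z j)\<^sup>2) / card A))"
    using assms(2,3) by (simp add: field_simps)
  finally have mean: "(\<Sum>j\<in>A. g_fun n (z j)) / card A
      = 2 / real n + (\<Sum>j\<in>A. z j) / card A - \<kappa> * ((\<Sum>j\<in>A. (z j)\<^sup>2) / card A)"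
    using assms(2,3) by simp
  have "((\<Sum>j\<in>A. z j) / card A)\<^sup>2 \<le> (\<Sum>j\<in>A. (z j)\<^sup>2) / card A"
    using sum_squared_le_sum_of_squares[of z A] assms(2,3)
    by (simp add: power_divide divide_simps power2_eq_square)
  moreover have "\<kappa> \<ge> 0" unfolding \<kappa>_def using assms(1) by simp
  ultimately have "\<kappa> * ((\<Sum>j\<in>A. z j) / card A)\<^sup>2 \<le> \<kappa> * ((\<Sum>j\<in>A. (z j)\<^sup>2) / card A)"
    by (rule mult_left_mono)
  then show ?thesis using mean g[of "(\<Sum>j\<in>A. z j) / card A"] by linarith
qed

lemma MBD_eq_sum_coords:
  "MBD n m Y y = (\<Sum>k\<in>{1..m}. \<Sum>a\<in>{1..n}. \<Sum>b\<in>{a+1..n}.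
       if min (Y a k) (Y b k) \<le> y k \<and> y k \<le> max (Y a k) (Y b k) then 1 else 0)
     / (real m * real (n choose 2))"
proof -
  let ?f = "\<lambda>a b k. if min (Y a k) (Y b k) \<le> y k \<and> y k \<le> max (Y a k) (Y b k) then 1 else 0 :: real"
  have "MBD n m Y y = (\<Sum>a\<in>{1..n}. \<Sum>b\<in>{a+1..n}. \<Sum>k\<in>{1..m}. ?f a b k) / (real m * real (n choose 2))"
    unfolding MBD_def by (simp only: real_card_filter[OF finite_atLeastAtMost] sum_distrib_left sum_divide_distrib) (simp add: mult.commute)
  also have "(\<Sum>a\<in>{1..n}. \<Sum>b\<in>{a+1..n}. \<Sum>k\<in>{1..m}. ?f a b k) = (\<Sum>a\<in>{1..n}. \<Sum>k\<in>{1..m}. \<Sum>b\<in>{a+1..n}. ?f a b k)"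
    by (rule sum.cong[OF refl], rule sum.swap)
  also have "\<dots> = (\<Sum>k\<in>{1..m}. \<Sum>a\<in>{1..n}. \<Sum>b\<in>{a+1..n}. ?f a b k)"
    by (rule sum.swap)
  finally show ?thesis .
qed

lemma MEI_eq_sum_coords:
  "MEI n m Y y = (\<Sum>k\<in>{1..m}. real (card {a\<in>{1..n}. y k \<le> Y a k})) / (real n * real m)"
proof -
  have "MEI n m Y y = (\<Sum>a\<in>{1..n}. \<Sum>k\<in>{1..m}. if y k \<le> Y a k then 1 else 0) / (real n * real m)"
    unfolding MEI_def by (simp only: real_card_filter[OF finite_atLeastAtMost] sum_distrib_left sum_divide_distrib) (simp add: mult.commute)
  also have "\<dots> = (\<Sum>k\<in>{1..m}. real (card {a\<in>{1..n}. y k \<le> Y a k})) / (real n * real m)"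
    by (subst sum.swap) (simp only: real_card_filter[OF finite_atLeastAtMost])
  finally show ?thesis .
qed

lemma MBD_injective_coords:
  assumes "\<And>k. k \<in> {1..m} \<Longrightarrow> inj_on (\<lambda>a. Y a k) {1..n}" and "i \<in> {1..n}"
  shows "MBD n m Y (Y i) = (\<Sum>k\<in>{1..m}. band_count n (sample_rank n (\<lambda>a. Y a k) i)) / (real m * real (n choose 2))"
  unfolding MBD_eq_sum_coords using card_bands_containing[OF assms(1) assms(2)] by simp

lemma MEI_eq_sum_ranks:
  "MEI n m Y (Y i) = (\<Sum>k\<in>{1..m}. real (n - sample_rank n (\<lambda>a. Y a k) i)) / (real n * real m)"
  unfolding MEI_eq_sum_coords using card_ge_sample_rank[of n "\<lambda>a. Y a k" i for k] by simp

definition no_crossings :: "nat \<Rightarrow> nat \<Rightarrow> (nat \<Rightarrow> nat \<Rightarrow> real) \<Rightarrow> bool" where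
  "no_crossings n m Y \<longleftrightarrow> (\<forall>a\<in>{1..n}. \<forall>b\<in>{1..n}. a \<noteq> b \<longrightarrow>
     (\<forall>k1\<in>{1..m}. \<forall>k2\<in>{1..m}. (Y a k1 - Y b k1) * (Y a k2 - Y b k2) > 0))"

lemma no_crossings_inj_on:
  assumes "no_crossings n m Y" and "k \<in> {1..m}"
  shows "inj_on (\<lambda>a. Y a k) {1..n}"
proof (rule inj_onI)
  fix a b assume a: "a \<in> {1..n}" and b: "b \<in> {1..n}" and eq: "Y a k = Y b k"
  show "a = b"
  proof (rule ccontr)
    assume "a \<noteq> b"
    then have "(Y a k - Y b k) * (Y a k - Y b k) > 0"
      using assms a b unfolding no_crossings_def by blast
    then show False using eq by simp
  qed
qed

lemma no_crossings_sample_rank: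
  assumes "no_crossings n m Y" and "k \<in> {1..m}" and "i \<in> {1..n}"
  shows "sample_rank n (\<lambda>a. Y a k) i = sample_rank n (\<lambda>a. Y a 1) i"
proof (rule sample_rank_cong)
  fix a assume "a \<in> {1..n}"
  then have "a \<noteq> i \<Longrightarrow> (Y a k - Y i k) * (Y a 1 - Y i 1) > 0"
    using assms unfolding no_crossings_def by auto
  then show "Y a k < Y i k \<longleftrightarrow> Y a 1 < Y i 1"
    by (cases "a = i") (auto simp: zero_less_mult_iff)
qed

lemma MEI_no_crossings:
  assumes "no_crossings n m Y" and "m \<ge> 1" and "i \<in> {1..n}"
  shows "MEI n m Y (Y i) = real (n - sample_rank n (\<lambda>a. Y a 1) i) / real n"
proof -
  have "(\<Sum>k\<in>{1..m}. real (n - sample_rank n (\<lambda>a. Y a k) i))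
      = (\<Sum>k\<in>{1..m}. real (n - sample_rank n (\<lambda>a. Y a 1) i))"
    by (rule sum.cong[OF refl]) (metis no_crossings_sample_rank[OF assms(1) _ assms(3)])
  then show ?thesis using assms(2) unfolding MEI_eq_sum_ranks by simp
qed

lemma MBD_no_crossings:
  assumes "no_crossings n m Y" and "m \<ge> 1" and "i \<in> {1..n}"
  shows "MBD n m Y (Y i) = band_count n (sample_rank n (\<lambda>a. Y a 1) i) / real (n choose 2)"
proof -
  have "MBD n m Y (Y i) = (\<Sum>k\<in>{1..m}. band_count n (sample_rank n (\<lambda>a. Y a k) i)) / (real m * real (n choose 2))"
    using MBD_injective_coords no_crossings_inj_on[OF assms(1)] assms(3) by blast
  also have "(\<Sum>k\<in>{1..m}. band_count n (sample_rank n (\<lambda>a. Y a k) i))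
      = (\<Sum>k\<in>{1..m}. band_count n (sample_rank n (\<lambda>a. Y a 1) i))"
    by (rule sum.cong[OF refl]) (metis no_crossings_sample_rank[OF assms(1) _ assms(3)])
  finally show ?thesis using assms(2) by simp
qed

lemma MBD_of_MEI_mat:
  assumes nc: "\<And>j. j \<in> {1..p} \<Longrightarrow> no_crossings n N (\<lambda>a k. x a j k)"
    and N: "N \<ge> 1" and i: "i \<in> {1..n}"
  shows "MBD n p (MEI_mat n N x) (MEI_mat n N x i)
       = (\<Sum>j\<in>{1..p}. band_count n (sample_rank n (\<lambda>a. x a j 1) i)) / (real p * real (n choose 2))"
proof -
  define U where "U = MEI_mat n N x"
  define r where "r a j = sample_rank n (\<lambda>b. x b j 1) a" for a j
  have inj_x: "inj_on (\<lambda>a. x a j 1) {1..n}" if "j \<in> {1..p}" for j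
    using no_crossings_inj_on[OF nc[OF that]] N by simp
  have U_less_iff: "U a j < U b j \<longleftrightarrow> x b j 1 < x a j 1"
    if a: "a \<in> {1..n}" and b: "b \<in> {1..n}" and j: "j \<in> {1..p}" for a b j
  proof -
    have "U a j = real (n - r a j) / real n" "U b j = real (n - r b j) / real n"
      unfolding U_def MEI_mat_def r_def using MEI_no_crossings[OF nc[OF j] N] a b by simp_all
    moreover have "r a j < n" "r b j < n" unfolding r_def using sample_rank_less_card a b by auto
    ultimately have "U a j < U b j \<longleftrightarrow> r b j < r a j"
      by (auto simp: divide_less_cancel of_nat_diff)
    also have "\<dots> \<longleftrightarrow> x b j 1 < x a j 1"
      unfolding r_def by (rule sample_rank_less_iff[OF inj_x[OF j] b a])
    finally show ?thesis .
  qed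
  have inj_U: "inj_on (\<lambda>a. U a j) {1..n}" if j: "j \<in> {1..p}" for j
  proof (rule inj_onI)
    fix a b assume a: "a \<in> {1..n}" and b: "b \<in> {1..n}" and "U a j = U b j"
    then have "x a j 1 = x b j 1" using U_less_iff[OF a b j] U_less_iff[OF b a j] by auto
    then show "a = b" using inj_onD[OF inj_x[OF j] _ a b] by simp
  qed
  have "sample_rank n (\<lambda>a. U a j) i = n - 1 - r i j" if j: "j \<in> {1..p}" for j
  proof -
    have "sample_rank n (\<lambda>a. U a j) i = card {a\<in>{1..n}. x i j 1 < x a j 1}"
      unfolding sample_rank_def using U_less_iff[OF _ i j] by (metis (no_types, lifting))
    then show ?thesis unfolding r_def using card_gt_sample_rank[OF inj_x[OF j] i] by simp
  qed
  then have "band_count n (sample_rank n (\<lambda>a. U a j) i) = band_count n (r i j)" if "j \<in> {1..p}" for j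
    using band_count_mirror[OF sample_rank_less_card[OF i]] that unfolding r_def by simp
  moreover have "MBD n p U (U i)
      = (\<Sum>j\<in>{1..p}. band_count n (sample_rank n (\<lambda>a. U a j) i)) / (real p * real (n choose 2))"
    by (rule MBD_injective_coords[OF inj_U i])
  ultimately show ?thesis unfolding U_def r_def by simp
qed

lemma MEI_of_MBD_mat:
  assumes n: "n \<ge> 2" and nc: "\<And>j. j \<in> {1..p} \<Longrightarrow> no_crossings n N (\<lambda>a k. x a j k)"
    and N: "N \<ge> 1" and i: "i \<in> {1..n}"
  shows "MEI n p (MBD_mat n N x) (MBD_mat n N x i)
       = (\<Sum>j\<in>{1..p}. real (n - 2 * min (sample_rank n (\<lambda>a. x a j 1) i) (n - 1 - sample_rank n (\<lambda>a. x a j 1) i)))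
         / (real n * real p)"
proof -
  define r where "r a j = sample_rank n (\<lambda>b. x b j 1) a" for a j
  have C: "real (n choose 2) > 0" using n by simp
  have "card {a\<in>{1..n}. MBD_mat n N x i j \<le> MBD_mat n N x a j} = n - 2 * min (r i j) (n - 1 - r i j)"
    if j: "j \<in> {1..p}" for j
  proof -
    have V: "MBD_mat n N x a j = band_count n (r a j) / real (n choose 2)" if "a \<in> {1..n}" for a
      unfolding MBD_mat_def r_def using MBD_no_crossings[OF nc[OF j] N that] by simp
    have "{a\<in>{1..n}. MBD_mat n N x i j \<le> MBD_mat n N x a j} = {a\<in>{1..n}. band_count n (r i j) \<le> band_count n (r a j)}"
      using V[OF i] V C by (auto simp: divide_le_cancel)
    also have "card \<dots> = card {l\<in>{0..<n}. band_count n (r i j) \<le> band_count n l}"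
      unfolding r_def using no_crossings_inj_on[OF nc[OF j]] N by (intro card_image_sample_rank) simp
    also have "\<dots> = n - 2 * min (r i j) (n - 1 - r i j)"
      using card_band_count_ge sample_rank_less_card[OF i] unfolding r_def by blast
    finally show ?thesis .
  qed
  then show ?thesis unfolding MEI_eq_sum_coords r_def by simp
qed

lemma MBD_of_MEI_mat_eq_mean:
  assumes n: "n \<ge> 2" and nc: "\<And>j. j \<in> {1..p} \<Longrightarrow> no_crossings n N (\<lambda>a k. x a j k)"
    and N: "N \<ge> 1" and i: "i \<in> {1..n}"
  shows "MBD n p (MEI_mat n N x) (MEI_mat n N x i)
       = (\<Sum>j\<in>{1..p}. g_fun n (centrality n (sample_rank n (\<lambda>a. x a j 1) i))) / real p"
proof -
  have "MBD n p (MEI_mat n N x) (MEI_mat n N x i)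
      = (\<Sum>j\<in>{1..p}. band_count n (sample_rank n (\<lambda>a. x a j 1) i) / real (n choose 2)) / real p"
    using MBD_of_MEI_mat[where x = x and p = p, OF nc N i] by (simp add: sum_divide_distrib mult.commute)
  then show ?thesis
    using band_count_eq_g_fun[OF n sample_rank_less_card[OF i]] by simp
qed

lemma one_minus_MEI_of_MBD_mat_eq_mean:
  assumes n: "n \<ge> 2" and p: "p \<ge> 1" and nc: "\<And>j. j \<in> {1..p} \<Longrightarrow> no_crossings n N (\<lambda>a k. x a j k)"
    and N: "N \<ge> 1" and i: "i \<in> {1..n}"
  shows "1 - MEI n p (MBD_mat n N x) (MBD_mat n N x i)
       = (\<Sum>j\<in>{1..p}. centrality n (sample_rank n (\<lambda>a. x a j 1) i)) / real p"
proof -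
  let ?c = "\<lambda>j. centrality n (sample_rank n (\<lambda>a. x a j 1) i)"
  have "MEI n p (MBD_mat n N x) (MBD_mat n N x i)
      = (\<Sum>j\<in>{1..p}. real (n - 2 * min (sample_rank n (\<lambda>a. x a j 1) i) (n - 1 - sample_rank n (\<lambda>a. x a j 1) i)))
          / (real n * real p)"
    by (rule MEI_of_MBD_mat[where x = x and p = p, OF n nc N i])
  also have "\<dots> = (\<Sum>j\<in>{1..p}. real (n - 2 * min (sample_rank n (\<lambda>a. x a j 1) i) (n - 1 - sample_rank n (\<lambda>a. x a j 1) i))
          / (real n * real p))"
    by (rule sum_divide_distrib)
  also have "\<dots> = (\<Sum>j\<in>{1..p}. (1 - ?c j) / real p)"
    using n unfolding centrality_def by (intro sum.cong refl) (simp add: of_nat_diff field_simps)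
  also have "\<dots> = 1 - (\<Sum>j\<in>{1..p}. ?c j) / real p"
    using p by (simp add: sum_divide_distrib[symmetric] sum_subtractf field_simps)
  finally show ?thesis by simp
qed

lemma sample_rank_concordant_dims:
  assumes "\<forall>i\<in>{1..n}. \<forall>h\<in>{1..n}. i \<noteq> h \<longrightarrow>
      (\<forall>j\<in>{1..p}. \<forall>l\<in>{1..p}. j \<noteq> l \<longrightarrow> (x i j k - x h j k) * (x i l k - x h l k) > 0)"
    and "i \<in> {1..n}" and "j \<in> {1..p}" and "l \<in> {1..p}"
  shows "sample_rank n (\<lambda>a. x a j k) i = sample_rank n (\<lambda>a. x a l k) i"
proof (rule sample_rank_cong)
  fix a assume "a \<in> {1..n}"
  then have "a \<noteq> i \<Longrightarrow> j \<noteq> l \<Longrightarrow> (x a j k - x i j k) * (x a l k - x i l k) > 0"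
    using assms by blast
  then show "x a j k < x i j k \<longleftrightarrow> x a l k < x i l k"
    by (cases "a = i \<or> j = l") (auto simp: zero_less_mult_iff)
qed

theorem proposition1:
  fixes n p N :: nat and x :: "nat \<Rightarrow> nat \<Rightarrow> nat \<Rightarrow> real"
  assumes "n \<ge> 2" and "p \<ge> 1" and "N \<ge> 1"
  defines "U \<equiv> MEI_mat n N x" and "V \<equiv> MBD_mat n N x"
  shows "((\<forall>j\<in>{1..p}. \<forall>i\<in>{1..n}. \<forall>h\<in>{1..n}. i \<noteq> h \<longrightarrow>
              (\<forall>k1\<in>{1..N}. \<forall>k2\<in>{1..N}. (x i j k1 - x h j k1) * (x i j k2 - x h j k2) > 0))
          \<longrightarrow> (\<forall>i\<in>{1..n}. MBD n p U (U i) \<le> g_fun n (1 - MEI n p V (V i))))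
       \<and> (((\<forall>j\<in>{1..p}. \<forall>i\<in>{1..n}. \<forall>h\<in>{1..n}. i \<noteq> h \<longrightarrow>
              (\<forall>k1\<in>{1..N}. \<forall>k2\<in>{1..N}. (x i j k1 - x h j k1) * (x i j k2 - x h j k2) > 0))
            \<and> (\<forall>k\<in>{1..N}. \<forall>i\<in>{1..n}. \<forall>h\<in>{1..n}. i \<noteq> h \<longrightarrow>
              (\<forall>j\<in>{1..p}. \<forall>l\<in>{1..p}. j \<noteq> l \<longrightarrow> (x i j k - x h j k) * (x i l k - x h l k) > 0)))
          \<longrightarrow> (\<forall>i\<in>{1..n}. MBD n p U (U i) = g_fun n (1 - MEI n p V (V i))))"
proof -
  note n = assms(1) and p = assms(2) and N = assms(3)
  let ?H1 = "\<forall>j\<in>{1..p}. \<forall>i\<in>{1..n}. \<forall>h\<in>{1..n}. i \<noteq> h \<longrightarrow>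
      (\<forall>k1\<in>{1..N}. \<forall>k2\<in>{1..N}. (x i j k1 - x h j k1) * (x i j k2 - x h j k2) > 0)"
  let ?H2 = "\<forall>k\<in>{1..N}. \<forall>i\<in>{1..n}. \<forall>h\<in>{1..n}. i \<noteq> h \<longrightarrow>
      (\<forall>j\<in>{1..p}. \<forall>l\<in>{1..p}. j \<noteq> l \<longrightarrow> (x i j k - x h j k) * (x i l k - x h l k) > 0)"
  let ?z = "\<lambda>i j. centrality n (sample_rank n (\<lambda>a. x a j 1) i)"
  have mean_forms: "MBD n p U (U i) = (\<Sum>j\<in>{1..p}. g_fun n (?z i j)) / real p"
      "1 - MEI n p V (V i) = (\<Sum>j\<in>{1..p}. ?z i j) / real p"
    if H1: ?H1 and i: "i \<in> {1..n}" for i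
  proof -
    have nc: "no_crossings n N (\<lambda>a k. x a j k)" if "j \<in> {1..p}" for j
      using H1 that unfolding no_crossings_def by blast
    show "MBD n p U (U i) = (\<Sum>j\<in>{1..p}. g_fun n (?z i j)) / real p"
      unfolding U_def by (rule MBD_of_MEI_mat_eq_mean[where x = x and p = p, OF n nc N i])
    show "1 - MEI n p V (V i) = (\<Sum>j\<in>{1..p}. ?z i j) / real p"
      unfolding V_def by (rule one_minus_MEI_of_MBD_mat_eq_mean[where x = x, OF n p nc N i])
  qed
  have part_a: "MBD n p U (U i) \<le> g_fun n (1 - MEI n p V (V i))" if ?H1 and "i \<in> {1..n}" for i
    unfolding mean_forms[OF that] using g_fun_mean_le[OF n, of "{1..p}"] p by simp
  have part_b: "MBD n p U (U i) = g_fun n (1 - MEI n p V (V i))" if ?H1 and H2: ?H2 and i: "i \<in> {1..n}" for i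
  proof -
    have z_const: "?z i j = ?z i 1" if "j \<in> {1..p}" for j
      using sample_rank_concordant_dims[of n p x 1 i j 1] H2 i that N p by simp
    have "(\<Sum>j\<in>{1..p}. g_fun n (?z i j)) = (\<Sum>j\<in>{1..p}. g_fun n (?z i 1))"
      and "(\<Sum>j\<in>{1..p}. ?z i j) = (\<Sum>j\<in>{1..p}. ?z i 1)"
      by (rule sum.cong[OF refl], metis z_const)+
    then show ?thesis unfolding mean_forms[OF \<open>?H1\<close> i] using p by simp
  qed
  show ?thesis using part_a part_b by blast
qed

end
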